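(* Let $n\ge2$ and let $\omega\in\widetilde{S}_n$ avoid $231$. Let $\alpha\in\{1,\dots,n\}$ be the index with $\omega_\alpha=\max\{\omega_1,\dots,\omega_n\}$. Then $n\le\omega_\alpha\le n+\alpha-1$, and $u=\sigma_\ell^{\,\omega_\alpha-n}(\omega)$ satisfies $\{u_1,\dots,u_n\}=\{1,\dots,n\}$ (so $u$ restricts to an ordinary permutation of $\{1,\dots,n\}$) with $u_{i}=n$ for $i=\alpha-\omega_\alpha+n$. Conversely, if $u\in\widetilde{S}_n$ with $\{u_1,\dots,u_n\}=\{1,\dots,n\}$ avoids $231$ and $u_i=n$, then $\sigma_r^{\,j}(u)$ avoids $231$ for every $0\le j\le n-i$.
   Context: For $n\ge 2$, the affine symmetric group $\widetilde{S}_n$ is the set of bijections $\omega:\mathbb{Z}\to\mathbb{Z}$ such that $\omega(i+n)=\omega(i)+n$ for all $i\in\mathbb{Z}$ and $\sum_{i=1}^n\omega(i)=\binom{n+1}{2}$; write $\omega_i=\omega(i)$. The map $\sigma_r:\widetilde{S}_n\to\widetilde{S}_n$ is defined by $\sigma_r(\omega)_i=\omega_{i-1}+1$ for all $i\in\mathbb{Z}$ (so $\sigma_r(\omega)_1=\omega_n-n+1$), and $\sigma_\ell=\sigma_r^{-1}$. For $p\in S_k$, $\omega$ contains $p$ if there exist integers $i_1<\cdots<i_k$ such that $\omega_{i_1}\cdots\omega_{i_k}$ has the same relative order as $p_1\cdots p_k$; otherwise $\omega$ avoids $p$. *)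

theory Defs
  imports Main
begin

definition affine_perm :: "nat \<Rightarrow> (int \<Rightarrow> int) \<Rightarrow> bool" where
  "affine_perm n w \<longleftrightarrow> bij w \<and> (\<forall>i. w (i + int n) = w i + int n)
     \<and> (\<Sum>i=1..int n. w i) = int ((n + 1) choose 2)"

definition sigma_r :: "(int \<Rightarrow> int) \<Rightarrow> (int \<Rightarrow> int)" where
  "sigma_r w = (\<lambda>i. w (i - 1) + 1)"

definition sigma_l :: "(int \<Rightarrow> int) \<Rightarrow> (int \<Rightarrow> int)" where
  "sigma_l w = (\<lambda>i. w (i + 1) - 1)"

definition contains_pat :: "(int \<Rightarrow> int) \<Rightarrow> nat list \<Rightarrow> bool" where
  "contains_pat w p \<longleftrightarrow> (\<exists>idx :: nat \<Rightarrow> int.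
      (\<forall>a b. a < b \<and> b < length p \<longrightarrow> idx a < idx b) \<and>
      (\<forall>a < length p. \<forall>b < length p. (w (idx a) < w (idx b)) \<longleftrightarrow> (p ! a < p ! b)))"

definition avoids_pat :: "(int \<Rightarrow> int) \<Rightarrow> nat list \<Rightarrow> bool" where
  "avoids_pat w p \<longleftrightarrow> \<not> contains_pat w p"

end

theory Submission imports Defs begin

(* Let w be a 231-avoiding affine permutation whose largest window value
   M = w(alpha) sits at position alpha of the window [1,n].  Avoidance of 231 says: once
   a value has been exceeded to the right, nothing further right drops below it.  Applied
   to the pairs (alpha - n, alpha) and (alpha, q) this shows that there is a position
   t in (alpha, alpha + n] such that every w(p) with p >= t exceeds M, while the n
   consecutive positions [t - n, t - 1] are mapped into the n consecutive values
   [M - n + 1, M].  Since every window of n consecutive positions of an affine permutation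
   has the value sum of the window [1,n] shifted by a multiple of n, comparing sums forces
   t = M + 1, i.e. w fixes the interval [M - n + 1, M] setwise; the bounds on M follow.
   Shifting by sigma_l^(M - n) moves this interval to [1,n].
   The converse half holds for every j: sigma_r^j conjugates w by a translation, which
   preserves (and reflects) pattern containment. *)

lemma contains_231I:
  fixes w :: "int \<Rightarrow> int"
  assumes "x < y" "y < z" "w z < w x" "w x < w y"
  shows "contains_pat w [2,3,1]"
  unfolding contains_pat_def
  by (rule exI[of _ "\<lambda>a. if a = 0 then x else if a = 1 then y else z"])
     (use assms in \<open>auto simp: less_Suc_eq numeral_3_eq_3\<close>)

lemma avoids_231_after_ascent:
  fixes w :: "int \<Rightarrow> int"
  assumes "avoids_pat w [2,3,1]" "inj w" "x < y" "y < z" "w x < w y"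
  shows "w x < w z"
proof -
  have "w z \<noteq> w x" using \<open>inj w\<close> \<open>x < y\<close> \<open>y < z\<close> by (auto dest: injD)
  moreover have "\<not> w z < w x"
    using contains_231I[of x y z w] assms unfolding avoids_pat_def by auto
  ultimately show ?thesis by linarith
qed

lemma contains_pat_translate:
  assumes "contains_pat (\<lambda>i. u (i - c) + c) p"
  shows "contains_pat u p"
proof -
  obtain idx where "\<forall>a b. a < b \<and> b < length p \<longrightarrow> idx a < idx b"
    and "\<forall>a < length p. \<forall>b < length p.
           (u (idx a - c) + c < u (idx b - c) + c) \<longleftrightarrow> (p ! a < p ! b)"
    using assms unfolding contains_pat_def by blast
  then show ?thesis unfolding contains_pat_def
    by (intro exI[of _ "\<lambda>a. idx a - c"]) auto
qed

lemma sigma_r_pow: "(sigma_r ^^ j) u = (\<lambda>i. u (i - int j) + int j)"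
  by (induction j) (auto simp: sigma_r_def algebra_simps)

lemma sigma_l_pow: "(sigma_l ^^ j) u = (\<lambda>i. u (i + int j) - int j)"
  by (induction j) (auto simp: sigma_l_def algebra_simps)

lemma window_sum_step:
  fixes f :: "int \<Rightarrow> int"
  assumes per: "\<And>i. f (i + int n) = f i + int n"
  shows "(\<Sum>i\<in>{a+2..a+1+int n}. f i) = (\<Sum>i\<in>{a+1..a+int n}. f i) + int n"
proof (cases "n = 0")
  case False
  have "{a+1..a+1+int n} = insert (a+1+int n) {a+1..a+int n}" using False by auto
  then have "(\<Sum>i\<in>{a+1..a+1+int n}. f i) = f (a+1+int n) + (\<Sum>i\<in>{a+1..a+int n}. f i)"
    by simp
  moreover have "{a+1..a+1+int n} = insert (a+1) {a+2..a+1+int n}" using False by auto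
  then have "(\<Sum>i\<in>{a+1..a+1+int n}. f i) = f (a+1) + (\<Sum>i\<in>{a+2..a+1+int n}. f i)"
    by simp
  moreover have "f (a+1+int n) = f (a+1) + int n" using per[of "a+1"] by simp
  ultimately show ?thesis by linarith
qed simp

lemma window_sum:
  fixes f :: "int \<Rightarrow> int"
  assumes per: "\<And>i. f (i + int n) = f i + int n"
  shows "(\<Sum>i\<in>{a+1..a+int n}. f i) = (\<Sum>i\<in>{1..int n}. f i) + a * int n"
proof (induction a rule: int_induct[where k=0])
  case (step1 a)
  then show ?case using window_sum_step[of f n, OF per, of a] by (simp add: algebra_simps)
next
  case (step2 a)
  then show ?case using window_sum_step[of f n, OF per, of "a - 1"] by (simp add: algebra_simps)
qed simp

lemma sum_first_integers: "(\<Sum>i\<in>{1..int n}. i) = int ((n + 1) choose 2)"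
proof (induction n)
  case (Suc n)
  have "{1..1 + int n} = insert (int n + 1) {1..int n}" by auto
  moreover have "Suc (Suc n) choose 2 = Suc n + (Suc n choose 2)"
    by (simp add: numeral_2_eq_2)
  ultimately show ?case using Suc by simp
qed simp

text \<open>If an affine permutation maps a window of n consecutive positions into a window of
  n consecutive values, the two windows coincide and the first is mapped onto itself:
  the image is the whole target by counting, and equal sums force equal offsets.\<close>
lemma affine_window_fixed:
  assumes ap: "affine_perm n w" and "n > 0"
    and into: "w ` {a+1..a+int n} \<subseteq> {b+1..b+int n}"
  shows "a = b" and "w ` {a+1..a+int n} = {a+1..a+int n}"
proof -
  have inj: "inj_on w {a+1..a+int n}"
    using ap unfolding affine_perm_def by (auto intro: inj_on_subset bij_is_inj)
  have per: "\<And>i. w (i + int n) = w i + int n" and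
    sum_w: "(\<Sum>i\<in>{1..int n}. w i) = int ((n + 1) choose 2)"
    using ap unfolding affine_perm_def by auto
  have onto: "w ` {a+1..a+int n} = {b+1..b+int n}"
    by (rule card_subset_eq) (use into card_image[OF inj] in auto)
  have "(\<Sum>i\<in>{a+1..a+int n}. w i) = (\<Sum>v\<in>{b+1..b+int n}. v)"
    using sum.reindex[OF inj, of id] onto by simp
  then have "a * int n = b * int n"
    using window_sum[of w n, OF per, of a] window_sum[of id n b] sum_w sum_first_integers[of n]
    by simp
  then show "a = b" using \<open>n > 0\<close> by simp
  then show "w ` {a+1..a+int n} = {a+1..a+int n}" using onto by simp
qed

lemma first_position_above:
  fixes f :: "int \<Rightarrow> int"
  assumes "M < f (a + int k)"
  obtains t where "a \<le> t" "t \<le> a + int k" "M < f t" "\<And>p. a \<le> p \<Longrightarrow> p < t \<Longrightarrow> f p \<le> M"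
proof -
  define d where "d = (LEAST d. M < f (a + int d))"
  have "M < f (a + int d)" "d \<le> k"
    unfolding d_def using assms by (auto intro: LeastI Least_le)
  moreover have "f p \<le> M" if "a \<le> p" "p < a + int d" for p
  proof -
    have "nat (p - a) < d" and "a + int (nat (p - a)) = p" using that by auto
    then show ?thesis using not_less_Least[of "nat (p - a)" "\<lambda>d. M < f (a + int d)"]
      unfolding d_def by force
  qed
  ultimately show ?thesis using that[of "a + int d"] by auto
qed

lemma window_below_max:
  assumes n2: "n \<ge> 2" and ap: "affine_perm n w" and av: "avoids_pat w [2,3,1]"
    and al: "\<alpha> \<in> {1..int n}" and max: "w \<alpha> = Max (w ` {1..int n})"
  obtains t where "\<alpha> < t" "t \<le> \<alpha> + int n" "\<And>p. t \<le> p \<Longrightarrow> w \<alpha> < w p"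
    "w ` {t - int n..t - 1} \<subseteq> {w \<alpha> - int n + 1..w \<alpha>}"
proof -
  define M where "M = w \<alpha>"
  have inj: "inj w" and per: "\<And>i. w (i + int n) = w i + int n"
    using ap bij_is_inj unfolding affine_perm_def by auto
  have le_M: "w j \<le> M" if "j \<in> {1..int n}" for j
    unfolding M_def max by (rule Max_ge) (use that in auto)
  have ne_M: "w p \<noteq> M" if "p \<noteq> \<alpha>" for p
    unfolding M_def using inj that by (auto dest: injD)
  text \<open>Left of alpha within distance n, values stay below M (by periodicity and maximality).\<close>
  have left: "w p < M" if "\<alpha> - int n < p" "p < \<alpha>" for p
  proof (cases "1 \<le> p")
    case True
    then show ?thesis using le_M[of p] ne_M[of p] that al by auto
  next
    case False
    then show ?thesis using le_M[of "p + int n"] per[of p] that al n2 by auto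
  qed
  text \<open>Right of alpha, values stay above M - n = w(alpha - n), by the ascent to alpha.\<close>
  have right: "M - int n < w r" if "\<alpha> < r" for r
    using avoids_231_after_ascent[OF av inj, of "\<alpha> - int n" \<alpha> r] per[of "\<alpha> - int n"]
      that n2 unfolding M_def by auto
  have "M < w (\<alpha> + 1 + int (n - 1))" using per[of \<alpha>] n2 unfolding M_def by simp
  then obtain t where t: "\<alpha> + 1 \<le> t" "t \<le> \<alpha> + int n" "M < w t"
      and before_t: "\<And>p. \<alpha> + 1 \<le> p \<Longrightarrow> p < t \<Longrightarrow> w p \<le> M"
    by (rule first_position_above) (use n2 in auto)
  text \<open>Once M is exceeded right of alpha, it stays exceeded, by the ascent from alpha.\<close>
  have after_t: "M < w p" if "t \<le> p" for p
    using avoids_231_after_ascent[OF av inj, of \<alpha> t p] t that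
    by (cases "p = t") (auto simp: M_def)
  have "w p \<in> {M - int n + 1..M}" if "t - int n \<le> p" "p \<le> t - 1" for p
  proof -
    consider "p < \<alpha>" | "p = \<alpha>" | "\<alpha> < p" by linarith
    then show ?thesis
    proof cases
      case 1
      then show ?thesis
        using left[of p] after_t[of "p + int n"] per[of p] that t by auto
    next
      case 3
      then show ?thesis using before_t[of p] right[of p] that by auto
    qed (use M_def n2 in auto)
  qed
  then show ?thesis using that[of t] t after_t unfolding M_def by force
qed

lemma max_window_fixed:
  assumes n2: "n \<ge> 2" and ap: "affine_perm n w" and "avoids_pat w [2,3,1]"
    and "\<alpha> \<in> {1..int n}" and max: "w \<alpha> = Max (w ` {1..int n})"
  shows "int n \<le> w \<alpha>" "w \<alpha> \<le> int n + \<alpha> - 1"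
    and "w ` {w \<alpha> - int n + 1..w \<alpha>} = {w \<alpha> - int n + 1..w \<alpha>}"
proof -
  obtain t where t: "\<alpha> < t" "t \<le> \<alpha> + int n" and after_t: "\<And>p. t \<le> p \<Longrightarrow> w \<alpha> < w p"
    and into: "w ` {t - int n..t - 1} \<subseteq> {w \<alpha> - int n + 1..w \<alpha>}"
    using window_below_max[OF assms] by blast
  have "w ` {(t - int n - 1) + 1..(t - int n - 1) + int n}
          \<subseteq> {(w \<alpha> - int n) + 1..(w \<alpha> - int n) + int n}"
    using into by simp
  from affine_window_fixed[OF ap _ this] n2
  have t_eq: "t = w \<alpha> + 1" and "w ` {t - int n..t - 1} = {t - int n..t - 1}" by auto
  then show "w ` {w \<alpha> - int n + 1..w \<alpha>} = {w \<alpha> - int n + 1..w \<alpha>}"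
    by (simp add: diff_add_eq)
  show "w \<alpha> \<le> int n + \<alpha> - 1" using t t_eq by simp
  have "w (int n) \<le> w \<alpha>"
    unfolding max by (rule Max_ge) (use n2 in auto)
  then show "int n \<le> w \<alpha>" using after_t[of "int n"] t_eq by force
qed

lemma translated_image:
  fixes w :: "int \<Rightarrow> int"
  assumes "w ` {k+1..k+m} = {k+1..k+m}"
  shows "(\<lambda>i. w (i + k) - k) ` {1..m} = {1..m}"
proof -
  have "(\<lambda>i. w (i + k) - k) ` {1..m} = (\<lambda>v. v - k) ` w ` (\<lambda>i. i + k) ` {1..m}"
    by (simp only: image_image)
  also have "(\<lambda>i. i + k) ` {1..m} = {k+1..k+m}"
    by (simp add: add.commute)
  also have "w ` {k+1..k+m} = {k+1..k+m}"
    by (fact assms)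
  also have "(\<lambda>v. v - k) ` {k+1..k+m} = {1..m}"
    using image_add_atLeastAtMost'[of "k+1" "k+m" "-k"] by simp
  finally show ?thesis .
qed

theorem mainTheorem9:
  fixes n :: nat
  assumes "n \<ge> 2"
  shows
   "(\<forall>w \<alpha>. affine_perm n w \<and> avoids_pat w [2,3,1] \<and> \<alpha> \<in> {1..int n}
        \<and> w \<alpha> = Max (w ` {1..int n}) \<longrightarrow>
       int n \<le> w \<alpha> \<and> w \<alpha> \<le> int n + \<alpha> - 1 \<and>
       (let u = (sigma_l ^^ nat (w \<alpha> - int n)) w in
          u ` {1..int n} = {1..int n} \<and> u (\<alpha> - w \<alpha> + int n) = int n))
    \<and>
    (\<forall>u i. affine_perm n u \<and> u ` {1..int n} = {1..int n} \<and> avoids_pat u [2,3,1]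
        \<and> i \<in> {1..int n} \<and> u i = int n \<longrightarrow>
       (\<forall>j::nat. int j \<le> int n - i \<longrightarrow> avoids_pat ((sigma_r ^^ j) u) [2,3,1]))"
proof (rule conjI; intro allI impI)
  fix w \<alpha>
  assume "affine_perm n w \<and> avoids_pat w [2,3,1] \<and> \<alpha> \<in> {1..int n}
        \<and> w \<alpha> = Max (w ` {1..int n})"
  then have "affine_perm n w" "avoids_pat w [2,3,1]" "\<alpha> \<in> {1..int n}"
    "w \<alpha> = Max (w ` {1..int n})" by auto
  note bounds = max_window_fixed[OF assms this]
  define k where "k = w \<alpha> - int n"
  have shift: "(sigma_l ^^ nat k) w = (\<lambda>i. w (i + k) - k)"
    unfolding sigma_l_pow using bounds(1) k_def by simp
  have "w ` {k+1..k+int n} = {k+1..k+int n}" using bounds(3) k_def by simp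
  then show "int n \<le> w \<alpha> \<and> w \<alpha> \<le> int n + \<alpha> - 1 \<and>
       (let u = (sigma_l ^^ nat (w \<alpha> - int n)) w in
          u ` {1..int n} = {1..int n} \<and> u (\<alpha> - w \<alpha> + int n) = int n)"
    using bounds(1,2) translated_image[of w k "int n"]
    unfolding Let_def shift[unfolded k_def] k_def by simp
next
  text \<open>The converse holds for every shift j, since shifting is a translation.\<close>
  fix u i j
  assume "affine_perm n u \<and> u ` {1..int n} = {1..int n} \<and> avoids_pat u [2,3,1]
        \<and> i \<in> {1..int n} \<and> u i = int n"
  then show "avoids_pat ((sigma_r ^^ j) u) [2,3,1]"
    using contains_pat_translate[of u "int j" "[2,3,1]"]
    unfolding avoids_pat_def sigma_r_pow by blast
qed

end
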